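(* Let $(M,d)$ be a pointed metric space and $f\in\mathrm{Lip}_0(M,M)$ such that $R_{\widehat f}$ has nonempty interior in $\mathcal F(M)$. Then for every nonempty finite set $N\subset M$ there is an increasing sequence $(n(j))_j\subset\mathbb N$ such that $f^{n(j)}(x)\to x$ as $j\to\infty$ for all $x\in N$. In particular $R_f=M$.
   Context: A pointed metric space is a metric space $(M,d)$ with a distinguished point $0$. $\mathrm{Lip}_0(M,M)$ denotes the Lipschitz maps $f:M\to M$ with $f(0)=0$; $\mathrm{Lip}_0(M)$ the real-valued Lipschitz functions vanishing at $0$, normed by the Lipschitz constant. $\delta:M\to\mathrm{Lip}_0(M)^*$, $\delta(x)(\varphi)=\varphi(x)$; $\mathcal F(M)$ is the norm-closed linear span of $\delta(M)$ in $\mathrm{Lip}_0(M)^*$. $\widehat f$ is the unique bounded linear operator on $\mathcal F(M)$ with $\widehat f(\delta(x))=\delta(f(x))$. For a self-map $g$ of a metric space (for an operator, with norm distance), $R_g=\{x:\liminf_{n\to\infty} d(x,g^n(x))=0\}$. *)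

theory Defs
  imports "HOL-Analysis.Analysis" "HOL-Library.Liminf_Limsup"
begin

text \<open>Elements of the dual Lip_0(M)^* are represented as functionals on real-valued
  functions; only their values on Lip_0(M) matter.\<close>

definition Lip0 :: "'a::metric_space \<Rightarrow> ('a \<Rightarrow> real) set" where
  "Lip0 z = {\<phi>. \<phi> z = 0 \<and> (\<exists>C. C-lipschitz_on UNIV \<phi>)}"

definition Lip0_ball :: "'a::metric_space \<Rightarrow> ('a \<Rightarrow> real) set" where
  "Lip0_ball z = {\<phi>. \<phi> z = 0 \<and> 1-lipschitz_on UNIV \<phi>}"

definition dnorm :: "'a::metric_space \<Rightarrow> (('a \<Rightarrow> real) \<Rightarrow> real) \<Rightarrow> real" where
  "dnorm z \<mu> = (SUP \<phi>\<in>Lip0_ball z. \<bar>\<mu> \<phi>\<bar>)"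

definition dirac :: "'a \<Rightarrow> ('a \<Rightarrow> real) \<Rightarrow> real" where
  "dirac x = (\<lambda>\<phi>. \<phi> x)"

text \<open>Lipschitz-free space F(M): functionals linear on Lip_0(M) that lie in the
  dual-norm closure of the linear span of dirac(M).\<close>
definition free_space :: "'a::metric_space \<Rightarrow> ((('a \<Rightarrow> real) \<Rightarrow> real)) set" where
  "free_space z = {\<mu>.
     (\<forall>\<phi>\<in>Lip0 z. \<forall>\<psi>\<in>Lip0 z. \<mu> (\<lambda>x. \<phi> x + \<psi> x) = \<mu> \<phi> + \<mu> \<psi>) \<and>
     (\<forall>\<phi>\<in>Lip0 z. \<forall>c. \<mu> (\<lambda>x. c * \<phi> x) = c * \<mu> \<phi>) \<and>
     (\<forall>e>0. \<exists>A a. finite A \<and>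
        (\<forall>\<phi>\<in>Lip0_ball z. \<bar>\<mu> \<phi> - (\<Sum>x\<in>A. a x * dirac x \<phi>)\<bar> \<le> e))}"

text \<open>The linearization of f: the unique bounded operator with
  fhat (dirac x) = dirac (f x); on F(M) it is given by precomposition.\<close>
definition fhat :: "('a \<Rightarrow> 'a) \<Rightarrow> (('a \<Rightarrow> real) \<Rightarrow> real) \<Rightarrow> (('a \<Rightarrow> real) \<Rightarrow> real)" where
  "fhat f \<mu> = (\<lambda>\<phi>. \<mu> (\<phi> \<circ> f))"

definition recurrent :: "('a::metric_space \<Rightarrow> 'a) \<Rightarrow> 'a set" where
  "recurrent g = {x. liminf (\<lambda>n. ereal (dist x ((g ^^ n) x))) = 0}"

definition recurrent_hat :: "'a::metric_space \<Rightarrow> ('a \<Rightarrow> 'a) \<Rightarrow> (('a \<Rightarrow> real) \<Rightarrow> real) set" where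
  "recurrent_hat z f = {\<mu>\<in>free_space z.
     liminf (\<lambda>n. ereal (dnorm z (\<lambda>\<phi>. \<mu> \<phi> - (fhat f ^^ n) \<mu> \<phi>))) = 0}"

end

theory Submission
  imports Defs
begin

text \<open>The recurrent set of \<open>fhat f\<close> contains a ball, hence a finite combination
  \<open>\<nu> = (\<lambda>\<phi>. \<Sum>l\<in>S. c l * \<phi> l)\<close> of Dirac functionals with \<open>N - {z} \<subseteq> S\<close> and generic
  coefficients: distinct subsets of \<open>S\<close> have distinct coefficient sums. Recurrence of \<open>\<nu>\<close>
  gives times \<open>n j\<close> along which \<open>\<Sum>l\<in>S. c l * (\<delta>(l) - \<delta>((f ^^ n j) l))\<close> tends to 0 in
  norm. Testing this against the tent functions \<open>max 0 (t - dist \<cdot> y)\<close>, \<open>y \<in> S\<close>, shows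
  that \<open>t \<mapsto> c y * t\<close> is uniformly close to a piecewise linear function whose slope
  between two consecutive distances \<open>dist ((f ^^ n j) l) y\<close> is the sum of \<open>c\<close> over the
  points whose images were already passed. Pigeonhole provides such a gap of definite
  length below a prescribed radius, and genericity forces the passed set to be \<open>{y}\<close>;
  hence \<open>(f ^^ n j) y \<rightarrow> y\<close>.\<close>

lemma Lip0_ball_abs_le_dist: "\<phi> \<in> Lip0_ball z \<Longrightarrow> \<bar>\<phi> x\<bar> \<le> dist x z"
  unfolding Lip0_ball_def lipschitz_on_def
  by (metis (mono_tags, lifting) UNIV_I dist_real_def diff_zero mem_Collect_eq mult_1)

lemma zero_in_Lip0_ball: "(\<lambda>_. 0) \<in> Lip0_ball z"
  unfolding Lip0_ball_def lipschitz_on_def by auto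

lemma tent_in_Lip0_ball:
  assumes "0 \<le> t" "t \<le> dist z y"
  shows "(\<lambda>x. max 0 (t - dist x y)) \<in> Lip0_ball z"
proof -
  have "dist (max 0 (t - dist a y)) (max 0 (t - dist b y)) \<le> 1 * dist a b" for a b
  proof -
    have "\<bar>dist a y - dist b y\<bar> \<le> dist a b"
      by (metis abs_le_iff dist_commute dist_triangle diff_le_eq minus_diff_eq add.commute)
    thus ?thesis unfolding dist_real_def by (simp add: abs_le_iff max_def)
  qed
  moreover have "max 0 (t - dist z y) = 0" using assms by simp
  ultimately show ?thesis unfolding Lip0_ball_def lipschitz_on_def by auto
qed

lemma dnorm_le: "(\<And>\<phi>. \<phi> \<in> Lip0_ball z \<Longrightarrow> \<bar>\<mu> \<phi>\<bar> \<le> B) \<Longrightarrow> dnorm z \<mu> \<le> B"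
  unfolding dnorm_def using zero_in_Lip0_ball by (intro cSUP_least) auto

lemma abs_le_dnorm:
  "(\<And>\<psi>. \<psi> \<in> Lip0_ball z \<Longrightarrow> \<bar>\<mu> \<psi>\<bar> \<le> B) \<Longrightarrow> \<phi> \<in> Lip0_ball z \<Longrightarrow> \<bar>\<mu> \<phi>\<bar> \<le> dnorm z \<mu>"
  unfolding dnorm_def by (rule cSUP_upper) (auto intro!: bdd_aboveI2)

lemma funpow_fhat: "(fhat f ^^ n) \<mu> = (\<lambda>\<phi>. \<mu> (\<phi> \<circ> (f ^^ n)))"
  by (induction n) (auto simp: fhat_def o_assoc)

lemma sum_dirac_in_free_space:
  assumes "finite S"
  shows "(\<lambda>\<phi>. \<Sum>l\<in>S. c l * \<phi> l) \<in> free_space z"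
  unfolding free_space_def
proof (intro CollectI conjI ballI allI impI)
  fix \<phi> \<psi> :: "'a \<Rightarrow> real"
  show "(\<Sum>l\<in>S. c l * (\<phi> l + \<psi> l)) = (\<Sum>l\<in>S. c l * \<phi> l) + (\<Sum>l\<in>S. c l * \<psi> l)"
    by (simp add: distrib_left sum.distrib)
next
  fix \<phi> :: "'a \<Rightarrow> real" and k :: real
  show "(\<Sum>l\<in>S. c l * (k * \<phi> l)) = k * (\<Sum>l\<in>S. c l * \<phi> l)"
    by (simp add: sum_distrib_left algebra_simps)
next
  fix e :: real assume "e > 0"
  thus "\<exists>A a. finite A \<and>
      (\<forall>\<phi>\<in>Lip0_ball z. \<bar>(\<Sum>l\<in>S. c l * \<phi> l) - (\<Sum>x\<in>A. a x * dirac x \<phi>)\<bar> \<le> e)"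
    by (intro exI[of _ S] exI[of _ c]) (auto simp: assms dirac_def)
qed

lemma abs_sum_dirac_diff_le_dnorm:
  assumes "finite S" "\<phi> \<in> Lip0_ball z"
  shows "\<bar>\<Sum>l\<in>S. c l * (\<phi> l - \<phi> (w l))\<bar> \<le> dnorm z (\<lambda>\<psi>. \<Sum>l\<in>S. c l * (\<psi> l - \<psi> (w l)))"
proof (rule abs_le_dnorm[OF _ assms(2)])
  fix \<psi> assume \<psi>: "\<psi> \<in> Lip0_ball z"
  have "\<bar>\<Sum>l\<in>S. c l * (\<psi> l - \<psi> (w l))\<bar> \<le> (\<Sum>l\<in>S. \<bar>c l * (\<psi> l - \<psi> (w l))\<bar>)"
    by (rule sum_abs)
  also have "\<dots> \<le> (\<Sum>l\<in>S. \<bar>c l\<bar> * (dist l z + dist (w l) z))"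
    unfolding abs_mult
    using Lip0_ball_abs_le_dist[OF \<psi>]
    by (intro sum_mono mult_left_mono) (smt (verit) abs_ge_zero)+
  finally show "\<bar>\<Sum>l\<in>S. c l * (\<psi> l - \<psi> (w l))\<bar> \<le> (\<Sum>l\<in>S. \<bar>c l\<bar> * (dist l z + dist (w l) z))" .
qed

definition distinct_subset_sums :: "'a set \<Rightarrow> ('a \<Rightarrow> real) \<Rightarrow> bool" where
  "distinct_subset_sums S c \<longleftrightarrow> (\<forall>T\<subseteq>S. \<forall>U\<subseteq>S. sum c T = sum c U \<longrightarrow> T = U)"

lemma distinct_subset_sums_insert:
  assumes "finite S" "distinct_subset_sums S c"
    and v: "v \<notin> {sum c U - sum c T | T U. T \<subseteq> S \<and> U \<subseteq> S}"
  shows "distinct_subset_sums (insert y S) (c(y := v))"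
  unfolding distinct_subset_sums_def
proof (intro allI impI)
  fix T U assume TU: "T \<subseteq> insert y S" "U \<subseteq> insert y S" and eq: "sum (c(y := v)) T = sum (c(y := v)) U"
  have sum_upd: "sum (c(y := v)) X = (if y \<in> X then v else 0) + sum c (X - {y})"
    if "X \<subseteq> insert y S" for X
  proof -
    have rest: "sum (c(y := v)) (X - {y}) = sum c (X - {y})" by (rule sum.cong) auto
    show ?thesis
    proof (cases "y \<in> X")
      case True
      moreover have "finite X" using that assms(1) finite_subset by blast
      ultimately show ?thesis using rest by (simp add: sum.remove)
    next
      case False
      then show ?thesis using rest by simp
    qed
  qed
  have S: "T - {y} \<subseteq> S" "U - {y} \<subseteq> S" using TU by auto
  note eq' = eq[unfolded sum_upd[OF TU(1)] sum_upd[OF TU(2)]]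
  consider "y \<in> T \<longleftrightarrow> y \<in> U" | "y \<in> T" "y \<notin> U" | "y \<notin> T" "y \<in> U" by blast
  then show "T = U"
  proof cases
    case 1
    then have "sum c (T - {y}) = sum c (U - {y})" using eq' by auto
    then have "T - {y} = U - {y}" using assms(2) S unfolding distinct_subset_sums_def by blast
    with 1 show ?thesis by blast
  next
    case 2
    then have "v = sum c (U - {y}) - sum c (T - {y})" using eq' by simp
    with v S show ?thesis by blast
  next
    case 3
    then have "v = sum c (T - {y}) - sum c (U - {y})" using eq' by simp
    with v S show ?thesis by blast
  qed
qed

lemma distinct_subset_sums_approx:
  fixes a \<rho> :: "'a \<Rightarrow> real"
  assumes "finite S" "\<forall>l\<in>S. \<rho> l > 0"
  shows "\<exists>c. (\<forall>l\<in>S. \<bar>c l - a l\<bar> < \<rho> l) \<and> distinct_subset_sums S c"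
  using assms
proof (induction S rule: finite_induct)
  case empty
  show ?case by (auto simp: distinct_subset_sums_def)
next
  case (insert y S)
  then obtain c where c_close: "\<forall>l\<in>S. \<bar>c l - a l\<bar> < \<rho> l" and c_gen: "distinct_subset_sums S c"
    by auto
  define B where "B = {sum c U - sum c T | T U. T \<subseteq> S \<and> U \<subseteq> S}"
  have "finite B"
    using insert(1) finite_image_set2[of "\<lambda>T. T \<subseteq> S" "\<lambda>U. U \<subseteq> S" "\<lambda>T U. sum c U - sum c T"]
    unfolding B_def by (simp add: Collect_mono finite_subset Pow_def)
  moreover have "\<rho> y > 0" using insert by auto
  ultimately have "infinite ({a y - \<rho> y<..<a y + \<rho> y} - B)"
    by (intro Diff_infinite_finite infinite_Ioo) simp_all
  then obtain v where "v \<in> {a y - \<rho> y<..<a y + \<rho> y}" "v \<notin> B"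
    using infinite_imp_nonempty by blast
  then have v: "\<bar>v - a y\<bar> < \<rho> y" "distinct_subset_sums (insert y S) (c(y := v))"
    using distinct_subset_sums_insert[OF insert(1) c_gen] by (auto simp: abs_diff_less_iff B_def)
  moreover have "\<forall>l\<in>insert y S. \<bar>(c(y := v)) l - a l\<bar> < \<rho> l"
    using c_close insert(2) v(1) by auto
  ultimately show ?case by blast
qed

lemma tent_sum_dirac_diff_le_dnorm:
  assumes "finite S" "y \<in> S" "0 \<le> t" "t \<le> dist z y" "\<forall>l\<in>S - {y}. t \<le> dist l y"
  shows "\<bar>c y * t - (\<Sum>l\<in>S. c l * max 0 (t - dist (w l) y))\<bar>
           \<le> dnorm z (\<lambda>\<phi>. \<Sum>l\<in>S. c l * (\<phi> l - \<phi> (w l)))"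
proof -
  let ?\<phi> = "\<lambda>x. max 0 (t - dist x y)"
  have "(\<Sum>l\<in>S. c l * ?\<phi> l) = c y * ?\<phi> y + (\<Sum>l\<in>S - {y}. c l * ?\<phi> l)"
    using sum.remove[OF assms(1,2)] .
  also have "(\<Sum>l\<in>S - {y}. c l * ?\<phi> l) = 0"
    using assms(5) by (intro sum.neutral) auto
  finally have "(\<Sum>l\<in>S. c l * ?\<phi> l) = c y * t" using assms(3) by simp
  moreover have "\<bar>\<Sum>l\<in>S. c l * (?\<phi> l - ?\<phi> (w l))\<bar> \<le> dnorm z (\<lambda>\<phi>. \<Sum>l\<in>S. c l * (\<phi> l - \<phi> (w l)))"
    by (rule abs_sum_dirac_diff_le_dnorm[OF assms(1) tent_in_Lip0_ball[OF assms(3,4)]])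
  ultimately show ?thesis by (simp add: sum_subtractf right_diff_distrib)
qed

lemma exists_gap_in_grid:
  fixes D :: "'a \<Rightarrow> real"
  assumes "finite S" "h > 0"
  shows "\<exists>m\<le>card S. \<forall>l\<in>S. D l \<le> h * real m \<or> h * real (Suc m) \<le> D l"
proof -
  define idx where "idx l = nat \<lfloor>D l / h\<rfloor>" for l
  have "card (idx ` S) < card {..card S}"
    using card_image_le[OF assms(1), of idx] by simp
  then obtain m where m: "m \<le> card S" "m \<notin> idx ` S"
    by (metis atMost_iff card_mono finite_imageI assms(1) not_le subsetI)
  have "D l \<le> h * real m \<or> h * real (Suc m) \<le> D l" if "l \<in> S" for l
  proof (rule ccontr)
    assume "\<not> ?thesis"
    then have "real m \<le> D l / h" "D l / h < real m + 1"
      using assms(2) by (auto simp: field_simps)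
    then have "idx l = m" unfolding idx_def by linarith
    with that m(2) show False by blast
  qed
  with m(1) show ?thesis by blast
qed

lemma tent_sum_increment:
  fixes c D :: "'a \<Rightarrow> real"
  assumes "finite S" "a \<le> b" "\<forall>l\<in>S. D l \<le> a \<or> b \<le> D l"
  shows "(\<Sum>l\<in>S. c l * max 0 (b - D l)) - (\<Sum>l\<in>S. c l * max 0 (a - D l))
           = (b - a) * sum c {l\<in>S. D l \<le> a}"
proof -
  have "(\<Sum>l\<in>S. c l * max 0 (b - D l)) - (\<Sum>l\<in>S. c l * max 0 (a - D l))
          = (\<Sum>l\<in>S. c l * (max 0 (b - D l) - max 0 (a - D l)))"
    by (simp add: sum_subtractf right_diff_distrib)
  also have "\<dots> = (\<Sum>l\<in>S. (b - a) * (if D l \<le> a then c l else 0))"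
    using assms(2,3) by (intro sum.cong) (auto simp: max_def algebra_simps)
  also have "\<dots> = (b - a) * sum c {l\<in>S. D l \<le> a}"
    by (simp add: sum.inter_filter[OF assms(1)] sum_distrib_left)
  finally show ?thesis .
qed

lemma distinct_subset_sums_gap:
  assumes "finite S" "distinct_subset_sums S c" "y \<in> S"
  shows "\<exists>\<delta>>0. \<forall>T\<subseteq>S. T \<noteq> {y} \<longrightarrow> \<delta> \<le> \<bar>c y - sum c T\<bar>"
proof -
  define \<Delta> where "\<Delta> = (\<lambda>T. \<bar>c y - sum c T\<bar>) ` {T. T \<subseteq> S \<and> T \<noteq> {y}}"
  have "finite \<Delta>" using assms(1) by (simp add: \<Delta>_def)
  have "{} \<in> {T. T \<subseteq> S \<and> T \<noteq> {y}}" by simp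
  then have "\<Delta> \<noteq> {}" unfolding \<Delta>_def by blast
  have "\<bar>c y - sum c T\<bar> > 0" if "T \<subseteq> S" "T \<noteq> {y}" for T
  proof -
    have "sum c {y} \<noteq> sum c T"
      using assms(2,3) that unfolding distinct_subset_sums_def by blast
    then show ?thesis by simp
  qed
  then have "\<forall>d\<in>\<Delta>. d > 0" unfolding \<Delta>_def by blast
  with \<open>finite \<Delta>\<close> \<open>\<Delta> \<noteq> {}\<close> have "Min \<Delta> > 0" by (simp add: Min_gr_iff)
  moreover have "Min \<Delta> \<le> \<bar>c y - sum c T\<bar>" if "T \<subseteq> S" "T \<noteq> {y}" for T
    using \<open>finite \<Delta>\<close> that unfolding \<Delta>_def by (intro Min_le) blast+
  ultimately show ?thesis by blast
qed

lemma dist_lt_if_dnorm_sum_dirac_diff_le: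
  fixes c :: "'a::metric_space \<Rightarrow> real"
  assumes S: "finite S" "distinct_subset_sums S c" "y \<in> S"
    and \<epsilon>: "0 < \<epsilon>" "\<epsilon> \<le> dist z y" "\<forall>l\<in>S - {y}. \<epsilon> \<le> dist l y"
  shows "\<exists>\<eta>>0. \<forall>w. dnorm z (\<lambda>\<phi>. \<Sum>l\<in>S. c l * (\<phi> l - \<phi> (w l))) \<le> \<eta> \<longrightarrow> dist (w y) y < \<epsilon>"
proof -
  obtain \<delta> where "\<delta> > 0" and \<delta>_le: "\<And>T. T \<subseteq> S \<Longrightarrow> T \<noteq> {y} \<Longrightarrow> \<delta> \<le> \<bar>c y - sum c T\<bar>"
    using distinct_subset_sums_gap[OF S] by blast
  define h where "h = \<epsilon> / (real (card S) + 1)"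
  have "h > 0" unfolding h_def using \<epsilon>(1) by simp
  have h_total: "h * (real (card S) + 1) = \<epsilon>" unfolding h_def by simp
  show ?thesis
  proof (intro exI[of _ "h * \<delta> / 4"] conjI allI impI)
    show "h * \<delta> / 4 > 0" using \<open>h > 0\<close> \<open>\<delta> > 0\<close> by simp
  next
    fix w assume small: "dnorm z (\<lambda>\<phi>. \<Sum>l\<in>S. c l * (\<phi> l - \<phi> (w l))) \<le> h * \<delta> / 4"
    define D where "D l = dist (w l) y" for l
    define g where "g t = (\<Sum>l\<in>S. c l * max 0 (t - D l))" for t
    have g_close: "\<bar>c y * t - g t\<bar> \<le> h * \<delta> / 4" if "0 \<le> t" "t \<le> \<epsilon>" for t
    proof -
      have "\<bar>c y * t - g t\<bar> \<le> dnorm z (\<lambda>\<phi>. \<Sum>l\<in>S. c l * (\<phi> l - \<phi> (w l)))"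
        unfolding g_def D_def
      proof (rule tent_sum_dirac_diff_le_dnorm[OF S(1,3) that(1)])
        show "t \<le> dist z y" using that(2) \<epsilon>(2) by linarith
        show "\<forall>l\<in>S - {y}. t \<le> dist l y" using that(2) \<epsilon>(3) by force
      qed
      with small show ?thesis by linarith
    qed
    obtain m where m: "m \<le> card S" and gap: "\<forall>l\<in>S. D l \<le> h * real m \<or> h * real (Suc m) \<le> D l"
      using exists_gap_in_grid[OF S(1) \<open>h > 0\<close>] by blast
    define T where "T = {l\<in>S. D l \<le> h * real m}"
    have grid: "0 \<le> h * real m" "h * real m < \<epsilon>" "h * real (Suc m) \<le> \<epsilon>"
      using \<open>h > 0\<close> m h_total by (auto intro: mult_strict_left_mono mult_left_mono simp del: of_nat_Suc)
    have jump: "g (h * real (Suc m)) - g (h * real m) = h * sum c T"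
    proof -
      have "h * real m \<le> h * real (Suc m)" using \<open>h > 0\<close> by simp
      then have "g (h * real (Suc m)) - g (h * real m) = (h * real (Suc m) - h * real m) * sum c T"
        unfolding g_def T_def by (rule tent_sum_increment[OF S(1) _ gap])
      then show ?thesis by (simp add: algebra_simps)
    qed
    have slope: "c y * (h * real (Suc m)) - c y * (h * real m) = h * c y"
      by (simp add: algebra_simps)
    have "\<bar>c y * (h * real m) - g (h * real m)\<bar> \<le> h * \<delta> / 4"
      "\<bar>c y * (h * real (Suc m)) - g (h * real (Suc m))\<bar> \<le> h * \<delta> / 4"
      using g_close grid \<open>h > 0\<close> by (simp_all del: of_nat_Suc)
    then have "\<bar>h * c y - h * sum c T\<bar> \<le> h * \<delta> / 2"
      using jump slope unfolding abs_le_iff by linarith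
    then have "\<bar>c y - sum c T\<bar> < \<delta>"
      using \<open>h > 0\<close> \<open>\<delta> > 0\<close> by (simp add: right_diff_distrib[symmetric] abs_mult)
    then have "T = {y}" using \<delta>_le[of T] unfolding T_def by fastforce
    then have "D y \<le> h * real m" unfolding T_def by auto
    with grid show "dist (w y) y < \<epsilon>" unfolding D_def by linarith
  qed
qed

lemma tendsto_if_dnorm_sum_dirac_diff_tendsto_0:
  fixes c :: "'a::metric_space \<Rightarrow> real"
  assumes S: "finite S" "distinct_subset_sums S c" "y \<in> S" "z \<notin> S"
    and lim: "(\<lambda>j. dnorm z (\<lambda>\<phi>. \<Sum>l\<in>S. c l * (\<phi> l - \<phi> (w j l)))) \<longlonglongrightarrow> 0"
  shows "(\<lambda>j. w j y) \<longlonglongrightarrow> y"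
proof (rule tendstoI)
  fix \<epsilon> :: real assume "\<epsilon> > 0"
  define E where "E = insert \<epsilon> (insert (dist z y) ((\<lambda>l. dist l y) ` (S - {y})))"
  define e where "e = Min E"
  have "finite E" using S(1) by (simp add: E_def)
  then have "e > 0" using S \<open>\<epsilon> > 0\<close> by (auto simp: e_def E_def)
  have "e \<le> x" if "x \<in> E" for x
    unfolding e_def using \<open>finite E\<close> that by (rule Min_le)
  then have e_le: "e \<le> \<epsilon>" "e \<le> dist z y" "\<forall>l\<in>S - {y}. e \<le> dist l y"
    by (auto simp: E_def)
  obtain \<eta> where "\<eta> > 0"
    and \<eta>: "\<forall>w. dnorm z (\<lambda>\<phi>. \<Sum>l\<in>S. c l * (\<phi> l - \<phi> (w l))) \<le> \<eta> \<longrightarrow> dist (w y) y < e"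
    using dist_lt_if_dnorm_sum_dirac_diff_le[OF S(1-3) \<open>e > 0\<close> e_le(2,3)] by blast
  have "\<forall>\<^sub>F j in sequentially. dnorm z (\<lambda>\<phi>. \<Sum>l\<in>S. c l * (\<phi> l - \<phi> (w j l))) < \<eta>"
    using order_tendstoD(2)[OF lim \<open>\<eta> > 0\<close>] .
  then show "\<forall>\<^sub>F j in sequentially. dist (w j y) y < \<epsilon>"
  proof eventually_elim
    case (elim j)
    then have "dist (w j y) y < e" using \<eta>[rule_format, of "w j"] by simp
    with e_le(1) show ?case by linarith
  qed
qed

lemma generic_sum_dirac_near:
  assumes \<mu>: "\<mu> \<in> free_space z" and "r > 0" "finite N"
  shows "\<exists>S c. finite S \<and> z \<notin> S \<and> N - {z} \<subseteq> S \<and> distinct_subset_sums S c \<and>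
           dnorm z (\<lambda>\<phi>. (\<Sum>l\<in>S. c l * \<phi> l) - \<mu> \<phi>) < r"
proof -
  have "r / 4 > 0" using \<open>r > 0\<close> by simp
  then obtain A a where "finite A"
    and approx: "\<forall>\<phi>\<in>Lip0_ball z. \<bar>\<mu> \<phi> - (\<Sum>x\<in>A. a x * dirac x \<phi>)\<bar> \<le> r / 4"
    using \<mu> unfolding free_space_def by blast
  define S where "S = (A \<union> N) - {z}"
  define a' where "a' l = (if l \<in> A then a l else 0)" for l
  define \<rho> where "\<rho> l = r / (4 * (real (card S) + 1) * (dist l z + 1))" for l
  have "finite S" using \<open>finite A\<close> \<open>finite N\<close> by (simp add: S_def)
  have "\<forall>l\<in>S. \<rho> l > 0" using \<open>r > 0\<close> by (simp add: \<rho>_def add_nonneg_pos)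
  then obtain c where close: "\<forall>l\<in>S. \<bar>c l - a' l\<bar> < \<rho> l" and "distinct_subset_sums S c"
    using distinct_subset_sums_approx[OF \<open>finite S\<close>] by blast
  have "dnorm z (\<lambda>\<phi>. (\<Sum>l\<in>S. c l * \<phi> l) - \<mu> \<phi>) \<le> r / 2"
  proof (rule dnorm_le)
    fix \<phi> assume \<phi>: "\<phi> \<in> Lip0_ball z"
    then have "\<phi> z = 0" by (simp add: Lip0_ball_def)
    then have "(\<Sum>x\<in>A. a x * dirac x \<phi>) = (\<Sum>l\<in>S. a' l * \<phi> l)"
      unfolding S_def a'_def dirac_def using \<open>finite A\<close> \<open>finite N\<close>
      by (intro sum.mono_neutral_cong) auto
    moreover have "\<bar>\<Sum>l\<in>S. (c l - a' l) * \<phi> l\<bar> \<le> r / 4"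
    proof -
      have "\<bar>\<Sum>l\<in>S. (c l - a' l) * \<phi> l\<bar> \<le> (\<Sum>l\<in>S. \<rho> l * (dist l z + 1))"
        using close Lip0_ball_abs_le_dist[OF \<phi>]
        by (intro order_trans[OF sum_abs] sum_mono)
          (auto simp: abs_mult intro!: mult_mono add_increasing2)
      also have "\<dots> = real (card S) * (r / (4 * (real (card S) + 1)))"
      proof -
        have "dist l z + 1 \<noteq> 0" for l using zero_le_dist[of l z] by linarith
        then show ?thesis by (simp add: \<rho>_def)
      qed
      also have "\<dots> \<le> r / 4" using \<open>r > 0\<close> by (simp add: field_simps)
      finally show ?thesis .
    qed
    moreover have "(\<Sum>l\<in>S. c l * \<phi> l) - (\<Sum>l\<in>S. a' l * \<phi> l) = (\<Sum>l\<in>S. (c l - a' l) * \<phi> l)"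
      by (simp add: sum_subtractf left_diff_distrib)
    moreover have "\<bar>\<mu> \<phi> - (\<Sum>x\<in>A. a x * dirac x \<phi>)\<bar> \<le> r / 4" using approx \<phi> by blast
    ultimately show "\<bar>(\<Sum>l\<in>S. c l * \<phi> l) - \<mu> \<phi>\<bar> \<le> r / 2" by linarith
  qed
  then show ?thesis
    using \<open>finite S\<close> \<open>distinct_subset_sums S c\<close> \<open>r > 0\<close> by (intro exI[of _ S] exI[of _ c]) (auto simp: S_def)
qed

lemma simultaneous_recurrence:
  fixes z :: "'a::metric_space" and f :: "'a \<Rightarrow> 'a"
  assumes "f z = z"
    and \<mu>: "\<mu> \<in> free_space z" "r > 0"
    and ball: "\<forall>\<nu>\<in>free_space z. dnorm z (\<lambda>\<phi>. \<nu> \<phi> - \<mu> \<phi>) < r \<longrightarrow> \<nu> \<in> recurrent_hat z f"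
    and "finite N"
  shows "\<exists>n::nat \<Rightarrow> nat. strict_mono n \<and> (\<forall>x\<in>N. (\<lambda>j. (f ^^ n j) x) \<longlonglongrightarrow> x)"
proof -
  obtain S c where S: "finite S" "z \<notin> S" "N - {z} \<subseteq> S" "distinct_subset_sums S c"
    and near: "dnorm z (\<lambda>\<phi>. (\<Sum>l\<in>S. c l * \<phi> l) - \<mu> \<phi>) < r"
    using generic_sum_dirac_near[OF \<mu> \<open>finite N\<close>] by blast
  define \<nu> where "\<nu> = (\<lambda>\<phi>::'a \<Rightarrow> real. \<Sum>l\<in>S. c l * \<phi> l)"
  define D where "D n = dnorm z (\<lambda>\<phi>. \<Sum>l\<in>S. c l * (\<phi> l - \<phi> ((f ^^ n) l)))" for n
  have "\<nu> \<in> recurrent_hat z f"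
    using ball[rule_format, OF sum_dirac_in_free_space[OF S(1), of c z]] near unfolding \<nu>_def by simp
  moreover have "(\<lambda>\<phi>. \<nu> \<phi> - (fhat f ^^ n) \<nu> \<phi>) = (\<lambda>\<phi>. \<Sum>l\<in>S. c l * (\<phi> l - \<phi> ((f ^^ n) l)))" for n
    unfolding funpow_fhat \<nu>_def by (simp add: sum_subtractf right_diff_distrib)
  ultimately have "liminf (\<lambda>n. ereal (D n)) = 0"
    unfolding recurrent_hat_def D_def by simp
  then obtain n where "strict_mono n" and "(\<lambda>j. ereal (D (n j))) \<longlonglongrightarrow> ereal 0"
    using liminf_subseq_lim[of "\<lambda>n. ereal (D n)"] by (auto simp: o_def zero_ereal_def)
  then have "(\<lambda>j. D (n j)) \<longlonglongrightarrow> 0" by simp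
  then have on_S: "(\<lambda>j. (f ^^ n j) y) \<longlonglongrightarrow> y" if "y \<in> S" for y
    using tendsto_if_dnorm_sum_dirac_diff_tendsto_0[OF S(1,4) that S(2), of "\<lambda>j. f ^^ n j"]
    unfolding D_def by blast
  have "(f ^^ k) z = z" for k by (induction k) (simp_all add: \<open>f z = z\<close>)
  then have "(\<lambda>j. (f ^^ n j) x) \<longlonglongrightarrow> x" if "x \<in> N" for x
    using on_S[of x] S(3) that by (cases "x = z") auto
  with \<open>strict_mono n\<close> show ?thesis by blast
qed

lemma recurrent_if_subseq_tendsto:
  assumes "strict_mono n" "(\<lambda>j. (g ^^ n j) x) \<longlonglongrightarrow> x"
  shows "x \<in> recurrent g"
proof -
  define X where "X k = ereal (dist x ((g ^^ k) x))" for k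
  have "(\<lambda>j. dist x ((g ^^ n j) x)) \<longlonglongrightarrow> 0"
    using tendsto_dist[OF tendsto_const[of x] assms(2)] by simp
  then have "(X \<circ> n) \<longlonglongrightarrow> 0" unfolding X_def o_def zero_ereal_def by simp
  then have "liminf X \<le> 0"
    using liminf_subseq_mono[OF assms(1), of X] lim_imp_Liminf[of sequentially] by fastforce
  moreover have "0 \<le> liminf X" by (rule Liminf_bounded) (simp add: X_def)
  ultimately show ?thesis unfolding recurrent_def X_def by simp
qed

theorem proposition3p2:
  fixes z :: "'a::metric_space" and f :: "'a \<Rightarrow> 'a"
  assumes "f z = z" and "\<exists>C. C-lipschitz_on UNIV f"
    and "\<exists>\<mu>\<in>free_space z. \<exists>r>0. \<forall>\<nu>\<in>free_space z.
           dnorm z (\<lambda>\<phi>. \<nu> \<phi> - \<mu> \<phi>) < r \<longrightarrow> \<nu> \<in> recurrent_hat z f"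
  shows "(\<forall>N. finite N \<and> N \<noteq> {} \<longrightarrow>
           (\<exists>n::nat \<Rightarrow> nat. strict_mono n \<and>
              (\<forall>x\<in>N. (\<lambda>j. (f ^^ n j) x) \<longlonglongrightarrow> x)))
         \<and> recurrent f = UNIV"
proof -
  obtain \<mu> r where "\<mu> \<in> free_space z" "r > 0"
    and "\<forall>\<nu>\<in>free_space z. dnorm z (\<lambda>\<phi>. \<nu> \<phi> - \<mu> \<phi>) < r \<longrightarrow> \<nu> \<in> recurrent_hat z f"
    using assms(3) by blast
  note recurrence = simultaneous_recurrence[OF assms(1) this]
  have "x \<in> recurrent f" for x
    using recurrence[of "{x}"] recurrent_if_subseq_tendsto by blast
  with recurrence show ?thesis by blast
qed

end
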